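(* Let $A$ be a densely defined closed operator in a complex Hilbert space $\mathcal{H}$ with $\operatorname{D}(A)\subset\operatorname{D}(A^* )$ and $\operatorname{Num}(A)\subset\{z:\operatorname{Im} z\ge 0\}$. Assume that for every sequence $a_n>0$ with $a_n\to0$ one has $K(a_n)\to\infty$, where $$K(a)=\inf\Big\{\tfrac{\operatorname{Im}\langle Av,v\rangle}{(\operatorname{Re}\langle Av,v\rangle)^2}: v\in\operatorname{D}(A),\|v\|=1,\ 0<|\langle Av,v\rangle|<a,\ \operatorname{Re}\langle Av,v\rangle>0\Big\}.$$ Let $\alpha\in\operatorname{Num}(A)$ with $0<\operatorname{Re}\alpha<1$, $0<\operatorname{Im}\alpha<1$, $|\alpha|<1$ and $(0,\alpha]\subset\operatorname{Num}(A)$, let $(\varepsilon_n)\subset(0,1)$ with $\varepsilon_n\to0$, and let $(u_n)\subset\operatorname{D}(A)$ with $\|u_n\|=1$ and $\langle Au_n,u_n\rangle=\varepsilon_n\alpha$. Let $(f_n)\subset\operatorname{D}(A)$ satisfy $\max(\sup_n\|f_n\|,\sup_n\|Af_n\|,\sup_n\|A^*f_n\|)<\infty$. Then $$\lim_{n\to\infty}\big(|\langle f_n,Au_n\rangle|+|\langle f_n,A^*u_n\rangle|\big)=0.$$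
   Context: $\operatorname{Num}(A)=\{\langle Af,f\rangle: f\in\operatorname{D}(A),\|f\|=1\}$; $(0,\alpha]$ denotes the half-open segment $\{t\alpha: 0<t\le1\}$. The infimum of the empty set is $+\infty$. *)

theory Defs
  imports "HOL-Analysis.Analysis"
begin

class complex_vector = real_vector +
  fixes scaleC :: "complex \<Rightarrow> 'a \<Rightarrow> 'a"
  assumes scaleC_add_right: "scaleC a (x + y) = scaleC a x + scaleC a y"
    and scaleC_add_left: "scaleC (a + b) x = scaleC a x + scaleC b x"
    and scaleC_scaleC: "scaleC a (scaleC b x) = scaleC (a * b) x"
    and scaleC_one: "scaleC 1 x = x"
    and scaleR_scaleC: "scaleR r x = scaleC (complex_of_real r) x"

text \<open>Complex inner product spaces; the inner product is linear in the first
  argument and conjugate-linear in the second; the norm is induced by it.\<close>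
class complex_inner = complex_vector + real_normed_vector +
  fixes cinner :: "'a \<Rightarrow> 'a \<Rightarrow> complex"
  assumes cinner_commute: "cinner x y = cnj (cinner y x)"
    and cinner_add_left: "cinner (x + y) z = cinner x z + cinner y z"
    and cinner_scaleC_left: "cinner (scaleC c x) y = c * cinner x y"
    and cinner_self_real_nonneg: "Im (cinner x x) = 0 \<and> 0 \<le> Re (cinner x x)"
    and cinner_eq_zero_iff: "cinner x x = 0 \<longleftrightarrow> x = 0"
    and norm_eq_sqrt_cinner: "norm x = sqrt (Re (cinner x x))"

class chilbert_space = complex_inner + complete_space

text \<open>An operator is a pair of a domain D and a map A (only its values on D matter).\<close>

definition is_subspace :: "'a::complex_vector set \<Rightarrow> bool" where
  "is_subspace D \<longleftrightarrow> 0 \<in> D \<and> (\<forall>x\<in>D. \<forall>y\<in>D. x + y \<in> D) \<and> (\<forall>c. \<forall>x\<in>D. scaleC c x \<in> D)"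

definition linear_on :: "'a::complex_vector set \<Rightarrow> ('a \<Rightarrow> 'a) \<Rightarrow> bool" where
  "linear_on D A \<longleftrightarrow> (\<forall>x\<in>D. \<forall>y\<in>D. A (x + y) = A x + A y) \<and>
                      (\<forall>c. \<forall>x\<in>D. A (scaleC c x) = scaleC c (A x))"

definition densely_defined :: "'a::chilbert_space set \<Rightarrow> ('a \<Rightarrow> 'a) \<Rightarrow> bool" where
  "densely_defined D A \<longleftrightarrow> is_subspace D \<and> linear_on D A \<and> closure D = UNIV"

definition closed_operator :: "'a::chilbert_space set \<Rightarrow> ('a \<Rightarrow> 'a) \<Rightarrow> bool" where
  "closed_operator D A \<longleftrightarrow>
     (\<forall>x y. \<forall>s::nat \<Rightarrow> 'a. (\<forall>n. s n \<in> D) \<longrightarrow> s \<longlonglongrightarrow> x \<longrightarrow> (\<lambda>n. A (s n)) \<longlonglongrightarrow> y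
        \<longrightarrow> x \<in> D \<and> A x = y)"

definition adj_dom :: "'a::chilbert_space set \<Rightarrow> ('a \<Rightarrow> 'a) \<Rightarrow> 'a set" where
  "adj_dom D A = {y. \<exists>z. \<forall>x\<in>D. cinner (A x) y = cinner x z}"

definition adj :: "'a::chilbert_space set \<Rightarrow> ('a \<Rightarrow> 'a) \<Rightarrow> 'a \<Rightarrow> 'a" where
  "adj D A y = (THE z. \<forall>x\<in>D. cinner (A x) y = cinner x z)"

definition Num :: "'a::chilbert_space set \<Rightarrow> ('a \<Rightarrow> 'a) \<Rightarrow> complex set" where
  "Num D A = {cinner (A f) f | f. f \<in> D \<and> norm f = 1}"

text \<open>The quantity K(a); the infimum of the empty set is +\<infinity> (taken in ereal).\<close>
definition Kfun :: "'a::chilbert_space set \<Rightarrow> ('a \<Rightarrow> 'a) \<Rightarrow> real \<Rightarrow> ereal" where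
  "Kfun D A a = Inf (ereal ` {Im (cinner (A v) v) / (Re (cinner (A v) v))\<^sup>2 | v.
      v \<in> D \<and> norm v = 1 \<and> 0 < cmod (cinner (A v) v) \<and> cmod (cinner (A v) v) < a
      \<and> Re (cinner (A v) v) > 0})"

end

theory Submission
  imports Defs
begin

text \<open>Write \<open>c = \<langle>Au, f\<rangle>\<close>, \<open>d = \<langle>Af, u\<rangle>\<close>, \<open>Q = \<langle>Af, f\<rangle>\<close>. On the complex line
  \<open>u + s f\<close> the form \<open>\<langle>Aw, w\<rangle>\<close> equals \<open>\<epsilon>\<alpha> + s\<^sup>* c + s d + |s|\<^sup>2 Q\<close>. Its imaginary part is
  non-negative for every \<open>s\<close>; taking \<open>|s| = \<surd>\<epsilon>\<close> rotated against the skew part \<open>d - c\<^sup>*\<close> shows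
  \<open>|d - c\<^sup>*| = O(\<surd>\<epsilon>)\<close>. Taking instead \<open>|s| = t = \<epsilon>\<^sup>1\<^sup>/\<^sup>4\<close> rotated against the Hermitian part
  \<open>c\<^sup>* + d\<close> produces a form value of real part \<open>\<ge> t|c\<^sup>* + d|/2\<close> but imaginary part \<open>O(t\<^sup>2)\<close>.
  Since \<open>K(a) \<rightarrow> \<infinity>\<close> confines the small values of the form to every parabola
  \<open>M (Re z)\<^sup>2 \<le> Im z\<close>, this forces \<open>c\<^sup>* + d \<rightarrow> 0\<close>, hence \<open>c, d \<rightarrow> 0\<close>; and \<open>\<langle>f, A\<^sup>*u\<rangle> = d\<close>.\<close>

lemma cinner_add_right: "cinner x (y + z) = cinner x y + cinner (x::'a::complex_inner) z"
  by (metis cinner_add_left cinner_commute complex_cnj_add)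

lemma cinner_scaleC_right: "cinner x (scaleC c y) = cnj c * cinner (x::'a::complex_inner) y"
  by (metis cinner_commute cinner_scaleC_left complex_cnj_mult)

lemma cinner_zero_right [simp]: "cinner (y::'a::complex_inner) 0 = 0"
  using cinner_add_right[of y 0 0] by simp

lemma cinner_diff_left: "cinner (x - z) y = cinner x y - cinner (z::'a::complex_inner) y"
  using cinner_add_left[of "x - z" z y] by (simp add: algebra_simps)

lemma cinner_diff_right: "cinner y (x - z) = cinner y x - cinner (y::'a::complex_inner) z"
  using cinner_add_right[of y "x - z" z] by (simp add: algebra_simps)

lemma cinner_self_eq_norm_power2: "cinner x x = complex_of_real (norm (x::'a::complex_inner) ^ 2)"
  using cinner_self_real_nonneg[of x] by (simp add: norm_eq_sqrt_cinner complex_eq_iff)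

lemma norm_scaleC: "norm (scaleC c (x::'a::complex_inner)) = cmod c * norm x"
proof -
  have "cinner (scaleC c x) (scaleC c x) = (c * cnj c) * cinner x x"
    by (simp add: cinner_scaleC_left cinner_scaleC_right algebra_simps)
  then have "complex_of_real (norm (scaleC c x) ^ 2) = complex_of_real ((cmod c * norm x) ^ 2)"
    by (simp add: cinner_self_eq_norm_power2 complex_norm_square[symmetric] power_mult_distrib)
  then have "norm (scaleC c x) ^ 2 = (cmod c * norm x) ^ 2"
    by (simp only: of_real_eq_iff)
  then show ?thesis
    by (simp add: power2_eq_iff_nonneg)
qed

lemma cinner_cauchy_schwarz: "cmod (cinner x y) \<le> norm x * norm (y::'a::complex_inner)"
proof (cases "y = 0")
  case True
  then show ?thesis by simp
next
  case False
  define g where "g = cinner x y"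
  define r where "r = g / complex_of_real ((norm y)\<^sup>2)"
  have ny: "0 < norm y"
    using False by simp
  have g_cnj: "cinner y x = cnj g"
    unfolding g_def by (rule cinner_commute)
  have r_g: "r * cnj g = complex_of_real ((cmod g)\<^sup>2 / (norm y)\<^sup>2)"
    using ny by (simp add: r_def complex_norm_square[symmetric])
  have "cinner (x - scaleC r y) (x - scaleC r y)
      = cinner x x - r * cnj g - cnj (r * cnj g) + r * cnj r * cinner y y"
    by (simp add: cinner_diff_left cinner_diff_right cinner_scaleC_left cinner_scaleC_right
        g_def[symmetric] g_cnj algebra_simps)
  also have "r * cnj r * cinner y y = r * cnj g"
    using ny by (simp add: r_def cinner_self_eq_norm_power2 power2_eq_square)
  finally have "complex_of_real ((norm (x - scaleC r y))\<^sup>2)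
      = complex_of_real ((norm x)\<^sup>2 - (cmod g)\<^sup>2 / (norm y)\<^sup>2)"
    by (simp add: cinner_self_eq_norm_power2 r_g)
  then have "(cmod g)\<^sup>2 / (norm y)\<^sup>2 \<le> (norm x)\<^sup>2"
    by (metis of_real_eq_iff diff_ge_0_iff_ge zero_le_power2)
  then have "(cmod g)\<^sup>2 \<le> (norm x * norm y)\<^sup>2"
    using ny by (simp add: field_simps power_mult_distrib)
  then show ?thesis
    unfolding g_def by (rule power2_le_imp_le) simp
qed

section \<open>The quadratic form on a complex line\<close>

text \<open>The value of \<open>\<langle>A(u + s f), u + s f\<rangle>\<close> in terms of \<open>z = \<langle>Au, u\<rangle>\<close>,
  \<open>c = \<langle>Au, f\<rangle>\<close>, \<open>d = \<langle>Af, u\<rangle>\<close> and \<open>Q = \<langle>Af, f\<rangle>\<close>.\<close>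
definition form_on_line :: "complex \<Rightarrow> complex \<Rightarrow> complex \<Rightarrow> complex \<Rightarrow> complex \<Rightarrow> complex" where
  "form_on_line z c d Q s = z + cnj s * c + s * d + s * cnj s * Q"

lemma exists_unit_rotation: "\<exists>\<sigma>. cmod \<sigma> = 1 \<and> \<sigma> * k = complex_of_real (cmod k)"
proof (cases "k = 0")
  case True
  then show ?thesis by (intro exI[of _ 1]) simp
next
  case False
  then show ?thesis
    by (intro exI[of _ "cnj k / complex_of_real (cmod k)"])
      (simp add: norm_divide complex_norm_square[symmetric] power2_eq_square mult.commute)
qed

lemma Re_form_on_line:
  "Re (form_on_line z c d Q s) = Re z + Re (s * (cnj c + d)) + (cmod s)\<^sup>2 * Re Q"
  by (simp add: form_on_line_def complex_norm_square[symmetric] algebra_simps)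

lemma Im_form_on_line:
  "Im (form_on_line z c d Q s) = Im z + Im (s * (d - cnj c)) + (cmod s)\<^sup>2 * Im Q"
  by (simp add: form_on_line_def complex_norm_square[symmetric] algebra_simps)

lemma norm_form_on_line_le:
  "cmod (form_on_line z c d Q s) \<le> cmod z + cmod s * (cmod c + cmod d) + (cmod s)\<^sup>2 * cmod Q"
proof -
  have "cmod (form_on_line z c d Q s) \<le> cmod z + cmod (cnj s * c) + cmod (s * d) + cmod (s * cnj s * Q)"
    unfolding form_on_line_def by (intro norm_triangle_le add_right_mono) simp
  then show ?thesis
    by (simp add: norm_mult power2_eq_square algebra_simps)
qed

lemma skew_part_bound:
  assumes "\<And>s. 0 \<le> Im (form_on_line z c d Q s)" and "0 \<le> t"
  shows "t * cmod (d - cnj c) \<le> Im z + t\<^sup>2 * cmod Q"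
proof -
  obtain \<sigma> where \<sigma>: "cmod \<sigma> = 1" "\<sigma> * (d - cnj c) = complex_of_real (cmod (d - cnj c))"
    using exists_unit_rotation by blast
  define s where "s = - \<i> * complex_of_real t * \<sigma>"
  have "cmod s = t"
    using \<sigma>(1) \<open>0 \<le> t\<close> by (simp add: s_def norm_mult)
  moreover have "Im (s * (d - cnj c)) = - (t * cmod (d - cnj c))"
    using \<sigma>(2) by (simp add: s_def mult.assoc)
  moreover have "t\<^sup>2 * Im Q \<le> t\<^sup>2 * cmod Q"
    using abs_Im_le_cmod[of Q] by (intro mult_left_mono) auto
  ultimately show ?thesis
    using assms(1)[of s] by (simp add: Im_form_on_line)
qed

lemma hermitian_part_bound:
  fixes z c d Q :: complex and t a M B \<delta> :: real
  assumes tangent: "\<And>s. cmod s = t \<Longrightarrow> 0 < Re (form_on_line z c d Q s) \<Longrightarrow>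
      cmod (form_on_line z c d Q s) < a \<Longrightarrow>
      M * (Re (form_on_line z c d Q s))\<^sup>2 \<le> Im (form_on_line z c d Q s)"
    and "0 < t" and "0 < \<delta>" and "0 \<le> M" and "0 \<le> Re z"
    and Im_small: "Im z + t * cmod (d - cnj c) + t\<^sup>2 * cmod Q \<le> t\<^sup>2 * B"
    and norm_small: "cmod z + t * (cmod c + cmod d) + t\<^sup>2 * cmod Q < a"
    and Q_small: "t * cmod Q \<le> \<delta> / 2"
    and M_large: "B < M * (\<delta> / 2)\<^sup>2"
  shows "cmod (cnj c + d) < \<delta>"
proof (rule ccontr)
  assume "\<not> cmod (cnj c + d) < \<delta>"
  obtain \<sigma> where \<sigma>: "cmod \<sigma> = 1" "\<sigma> * (cnj c + d) = complex_of_real (cmod (cnj c + d))"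
    using exists_unit_rotation by blast
  define s where "s = complex_of_real t * \<sigma>"
  define L where "L = form_on_line z c d Q s"
  have s: "cmod s = t"
    using \<sigma>(1) \<open>0 < t\<close> by (simp add: s_def norm_mult)
  have "t * \<delta> \<le> t * cmod (cnj c + d)"
    using \<open>\<not> cmod (cnj c + d) < \<delta>\<close> \<open>0 < t\<close> by simp
  moreover have "t\<^sup>2 * cmod Q \<le> t * (\<delta> / 2)"
    using mult_left_mono[OF Q_small, of t] \<open>0 < t\<close> by (simp add: power2_eq_square mult.assoc)
  moreover have "- (t\<^sup>2 * cmod Q) \<le> t\<^sup>2 * Re Q"
    using abs_Re_le_cmod[of Q] mult_left_mono[of "- cmod Q" "Re Q" "t\<^sup>2"] by simp
  moreover have "Re (s * (cnj c + d)) = t * cmod (cnj c + d)"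
    using \<sigma>(2) by (simp add: s_def mult.assoc)
  ultimately have Re_L: "t * (\<delta> / 2) \<le> Re L"
    using \<open>0 \<le> Re z\<close> by (simp add: L_def Re_form_on_line s)
  have "Im (s * (d - cnj c)) \<le> t * cmod (d - cnj c)"
    using abs_Im_le_cmod[of "s * (d - cnj c)"] by (simp add: norm_mult s)
  moreover have "t\<^sup>2 * Im Q \<le> t\<^sup>2 * cmod Q"
    using abs_Im_le_cmod[of Q] by (intro mult_left_mono) auto
  ultimately have "Im L \<le> t\<^sup>2 * B"
    using Im_small by (simp add: L_def Im_form_on_line s)
  moreover have "M * (Re L)\<^sup>2 \<le> Im L"
  proof (rule tangent[OF s, folded L_def])
    show "0 < Re L"
      using Re_L mult_pos_pos[OF \<open>0 < t\<close>, of "\<delta> / 2"] \<open>0 < \<delta>\<close> by linarith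
    show "cmod L < a"
      using norm_form_on_line_le[of z c d Q s] norm_small by (simp add: L_def s)
  qed
  moreover have "(t * (\<delta> / 2))\<^sup>2 \<le> (Re L)\<^sup>2"
    using Re_L \<open>0 < t\<close> \<open>0 < \<delta>\<close> by (intro power_mono) auto
  then have "M * (t * (\<delta> / 2))\<^sup>2 \<le> M * (Re L)\<^sup>2"
    using \<open>0 \<le> M\<close> by (rule mult_left_mono)
  moreover have "M * (t * (\<delta> / 2))\<^sup>2 = t\<^sup>2 * (M * (\<delta> / 2)\<^sup>2)"
    by (simp only: power_mult_distrib mult_ac)
  ultimately have "t\<^sup>2 * (M * (\<delta> / 2)\<^sup>2) \<le> t\<^sup>2 * B"
    by linarith
  then show False
    using M_large \<open>0 < t\<close> by simp
qed

lemma subspace_add: "is_subspace D \<Longrightarrow> x \<in> D \<Longrightarrow> y \<in> D \<Longrightarrow> x + y \<in> D"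
  unfolding is_subspace_def by blast

lemma subspace_scaleC: "is_subspace D \<Longrightarrow> x \<in> D \<Longrightarrow> scaleC c x \<in> D"
  unfolding is_subspace_def by blast

lemma cinner_eq_0_if_orthogonal_dense:
  assumes "closure D = UNIV" and "\<forall>x\<in>D. cinner x z = 0"
  shows "z = (0::'a::complex_inner)"
proof (rule ccontr)
  assume "z \<noteq> 0"
  then have nz: "0 < norm z"
    by simp
  then obtain x where x: "x \<in> D" "dist x z < norm z / 2"
    using assms(1) closure_approachable[of z D] by (metis UNIV_I half_gt_zero)
  have "norm z ^ 2 = cmod (cinner (z - x) z)"
    using assms(2) x(1) by (simp add: cinner_diff_left cinner_self_eq_norm_power2 norm_power)
  also have "\<dots> \<le> norm (z - x) * norm z"
    by (rule cinner_cauchy_schwarz)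
  also have "\<dots> \<le> (norm z / 2) * norm z"
    using x(2) by (intro mult_right_mono) (auto simp: dist_norm norm_minus_commute)
  finally show False
    using mult_pos_pos[OF nz nz] by (simp add: power2_eq_square)
qed

lemma cinner_adj:
  assumes "closure D = UNIV" and "y \<in> adj_dom D A" and "x \<in> D"
  shows "cinner (A x) y = cinner x (adj D A y)"
proof -
  obtain z where z: "\<forall>x\<in>D. cinner (A x) y = cinner x z"
    using assms(2) unfolding adj_dom_def by blast
  have "z' = z" if "\<forall>x\<in>D. cinner (A x) y = cinner x z'" for z'
    using cinner_eq_0_if_orthogonal_dense[OF assms(1), of "z' - z"] that z
    by (simp add: cinner_diff_right)
  then have "adj D A y = z"
    unfolding adj_def using z by (rule the_equality[rotated])
  then show ?thesis
    using z assms(3) by simp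
qed

lemma cinner_A_add_scaleC:
  assumes "is_subspace D" and "linear_on D A" and "u \<in> D" and "f \<in> D"
  shows "cinner (A (u + scaleC s f)) (u + scaleC s f) =
    form_on_line (cinner (A u) u) (cinner (A u) f) (cinner (A f) u) (cinner (A f) (f::'a::complex_inner)) s"
proof -
  have "A (u + scaleC s f) = A u + scaleC s (A f)"
    using assms subspace_scaleC[OF assms(1)] unfolding linear_on_def by simp
  then show ?thesis
    by (simp add: form_on_line_def cinner_add_left cinner_add_right cinner_scaleC_left
        cinner_scaleC_right algebra_simps)
qed

lemma cinner_A_normalize:
  assumes "is_subspace D" and "linear_on D A" and "w \<in> D" and "w \<noteq> (0::'a::complex_inner)"
  obtains v where "v \<in> D" and "norm v = 1"
    and "cinner (A v) v = complex_of_real (1 / (norm w)\<^sup>2) * cinner (A w) w"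
proof
  define r where "r = complex_of_real (1 / norm w)"
  show "scaleC r w \<in> D"
    using subspace_scaleC assms by blast
  show "norm (scaleC r w) = 1"
    using assms by (simp add: norm_scaleC r_def norm_divide)
  have "A (scaleC r w) = scaleC r (A w)"
    using assms unfolding linear_on_def by simp
  then show "cinner (A (scaleC r w)) (scaleC r w) = complex_of_real (1 / (norm w)\<^sup>2) * cinner (A w) w"
    by (simp add: cinner_scaleC_left cinner_scaleC_right r_def power2_eq_square)
qed

lemma Im_cinner_A_nonneg:
  assumes "is_subspace D" and "linear_on D A" and "Num D A \<subseteq> {z. 0 \<le> Im z}" and "w \<in> D"
  shows "0 \<le> Im (cinner (A w) w)"
proof (cases "w = 0")
  case True
  then show ?thesis by simp
next
  case False
  then obtain v where "v \<in> D" "norm v = 1"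
    and v: "cinner (A v) v = complex_of_real (1 / (norm w)\<^sup>2) * cinner (A w) w"
    using cinner_A_normalize assms by metis
  then have "cinner (A v) v \<in> Num D A"
    unfolding Num_def by blast
  then have "0 \<le> Im (cinner (A w) w) / (norm w)\<^sup>2"
    using assms(3) v by auto
  then show ?thesis
    using False by (simp add: zero_le_divide_iff)
qed

lemma cinner_A_bounds:
  fixes D :: "'a::chilbert_space set"
  assumes "closure D = UNIV" and "D \<subseteq> adj_dom D A" and "u \<in> D" and "norm u = 1" and "f \<in> D"
    and "norm f \<le> C" and "norm (A f) \<le> C" and "norm (adj D A f) \<le> C"
  shows "cmod (cinner (A u) f) \<le> C" and "cmod (cinner (A f) u) \<le> C"
    and "cmod (cinner (A f) f) \<le> C\<^sup>2"
proof -
  have "cinner (A u) f = cinner u (adj D A f)"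
    using cinner_adj assms(1-3,5) by blast
  then show "cmod (cinner (A u) f) \<le> C"
    using cinner_cauchy_schwarz[of u "adj D A f"] assms(4,8) by simp
  show "cmod (cinner (A f) u) \<le> C"
    using cinner_cauchy_schwarz[of "A f" u] assms(4,7) by simp
  have "norm (A f) * norm f \<le> C * C"
    using assms(6,7) by (intro mult_mono) (auto intro: order_trans[OF norm_ge_zero])
  then show "cmod (cinner (A f) f) \<le> C\<^sup>2"
    using cinner_cauchy_schwarz[of "A f" f] by (simp add: power2_eq_square)
qed

section \<open>Tangency of the numerical range to the imaginary axis\<close>

text \<open>Near \<open>0\<close>, the part of the numerical range in the right half plane lies inside every
  parabola \<open>M (Re z)\<^sup>2 \<le> Im z\<close>; stated homogeneously so that it applies to non-unit vectors.\<close>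
definition tangent_to_imaginary_axis :: "'a::complex_inner set \<Rightarrow> ('a \<Rightarrow> 'a) \<Rightarrow> bool" where
  "tangent_to_imaginary_axis D A \<longleftrightarrow> (\<forall>M. \<exists>a>0. \<forall>w\<in>D.
     0 < Re (cinner (A w) w) \<longrightarrow> cmod (cinner (A w) w) < a * (norm w)\<^sup>2 \<longrightarrow>
     M * (Re (cinner (A w) w))\<^sup>2 \<le> Im (cinner (A w) w) * (norm w)\<^sup>2)"

lemma Kfun_tendsto_infinity_imp_bound:
  assumes "((\<lambda>n. Kfun D A (inverse (real (Suc n)))) \<longlongrightarrow> \<infinity>) sequentially"
  obtains a where "0 < a" and "\<And>v. v \<in> D \<Longrightarrow> norm v = 1 \<Longrightarrow> 0 < cmod (cinner (A v) v) \<Longrightarrow>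
    cmod (cinner (A v) v) < a \<Longrightarrow> 0 < Re (cinner (A v) v) \<Longrightarrow>
    M < Im (cinner (A v) v) / (Re (cinner (A v) v))\<^sup>2"
proof -
  obtain N where N: "ereal M < Kfun D A (inverse (real (Suc N)))"
    using order_tendstoD(1)[OF assms, of "ereal M"] eventually_sequentially by auto
  show thesis
  proof (rule that)
    fix v assume "v \<in> D" "norm v = 1" "0 < cmod (cinner (A v) v)"
      "cmod (cinner (A v) v) < inverse (real (Suc N))" "0 < Re (cinner (A v) v)"
    then have "Kfun D A (inverse (real (Suc N))) \<le> ereal (Im (cinner (A v) v) / (Re (cinner (A v) v))\<^sup>2)"
      unfolding Kfun_def by (intro Inf_lower imageI) blast
    with N have "ereal M < ereal (Im (cinner (A v) v) / (Re (cinner (A v) v))\<^sup>2)"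
      by (rule order_less_le_trans)
    then show "M < Im (cinner (A v) v) / (Re (cinner (A v) v))\<^sup>2"
      by simp
  qed simp
qed

lemma tangent_to_imaginary_axis_if_Kfun_tendsto:
  fixes D :: "'a::chilbert_space set"
  assumes "is_subspace D" and "linear_on D A"
    and "((\<lambda>n. Kfun D A (inverse (real (Suc n)))) \<longlongrightarrow> \<infinity>) sequentially"
  shows "tangent_to_imaginary_axis D A"
  unfolding tangent_to_imaginary_axis_def
proof
  fix M
  obtain a where "0 < a" and K: "\<And>v. v \<in> D \<Longrightarrow> norm v = 1 \<Longrightarrow> 0 < cmod (cinner (A v) v) \<Longrightarrow>
    cmod (cinner (A v) v) < a \<Longrightarrow> 0 < Re (cinner (A v) v) \<Longrightarrow>
    M < Im (cinner (A v) v) / (Re (cinner (A v) v))\<^sup>2"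
    using Kfun_tendsto_infinity_imp_bound[OF assms(3)] by metis
  have "M * (Re z)\<^sup>2 \<le> Im z * (norm w)\<^sup>2"
    if w: "w \<in> D" "0 < Re z" "cmod z < a * (norm w)\<^sup>2" and z: "z = cinner (A w) w" for w z
  proof -
    have "w \<noteq> 0"
      using w z by auto
    then obtain v where "v \<in> D" "norm v = 1"
      and v: "cinner (A v) v = complex_of_real (1 / (norm w)\<^sup>2) * z"
      using cinner_A_normalize assms(1,2) w(1) z by metis
    moreover have "cmod (cinner (A v) v) < a"
      using w \<open>w \<noteq> 0\<close> by (simp add: v norm_divide norm_power divide_less_eq mult.commute)
    moreover have "0 < Re (cinner (A v) v)"
      using w \<open>w \<noteq> 0\<close> by (simp add: v)
    moreover then have "0 < cmod (cinner (A v) v)"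
      by (metis abs_Re_le_cmod abs_of_pos order_less_le_trans)
    ultimately have "M < Im (cinner (A v) v) / (Re (cinner (A v) v))\<^sup>2"
      using K by blast
    then show ?thesis
      using w \<open>w \<noteq> 0\<close> by (simp add: v power2_eq_square field_simps)
  qed
  then show "\<exists>a>0. \<forall>w\<in>D. 0 < Re (cinner (A w) w) \<longrightarrow> cmod (cinner (A w) w) < a * (norm w)\<^sup>2 \<longrightarrow>
     M * (Re (cinner (A w) w))\<^sup>2 \<le> Im (cinner (A w) w) * (norm w)\<^sup>2"
    using \<open>0 < a\<close> by blast
qed

lemma tangent_to_imaginary_axis_near_sphere:
  assumes "tangent_to_imaginary_axis D A" and Im_nonneg: "\<And>w. w \<in> D \<Longrightarrow> 0 \<le> Im (cinner (A w) w)"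
  obtains a where "0 < a" and "\<And>w. w \<in> D \<Longrightarrow> 1/2 \<le> norm w \<Longrightarrow> norm w \<le> 3/2 \<Longrightarrow>
    0 < Re (cinner (A w) w) \<Longrightarrow> cmod (cinner (A w) w) < a \<Longrightarrow>
    M * (Re (cinner (A w) w))\<^sup>2 \<le> Im (cinner (A w) w)"
proof -
  obtain a where "0 < a" and a: "\<forall>w\<in>D. 0 < Re (cinner (A w) w) \<longrightarrow> cmod (cinner (A w) w) < a * (norm w)\<^sup>2 \<longrightarrow>
     9/4 * M * (Re (cinner (A w) w))\<^sup>2 \<le> Im (cinner (A w) w) * (norm w)\<^sup>2"
    using assms(1) unfolding tangent_to_imaginary_axis_def by blast
  show thesis
  proof (rule that)
    show "0 < a / 4"
      using \<open>0 < a\<close> by simp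
    fix w assume w: "w \<in> D" "1/2 \<le> norm w" "norm w \<le> 3/2" "0 < Re (cinner (A w) w)"
      "cmod (cinner (A w) w) < a / 4"
    have "(1/2)\<^sup>2 \<le> (norm w)\<^sup>2" "(norm w)\<^sup>2 \<le> (3/2)\<^sup>2"
      using w(2,3) by (auto intro: power_mono)
    then have "a / 4 \<le> a * (norm w)\<^sup>2"
      using mult_left_mono[of "(1/2)\<^sup>2" "(norm w)\<^sup>2" a] \<open>0 < a\<close> by (simp add: power2_eq_square)
    then have "cmod (cinner (A w) w) < a * (norm w)\<^sup>2"
      using w(5) by linarith
    then have "9/4 * M * (Re (cinner (A w) w))\<^sup>2 \<le> Im (cinner (A w) w) * (norm w)\<^sup>2"
      using a w(1,4) by blast
    also have "\<dots> \<le> Im (cinner (A w) w) * (9/4)"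
      using \<open>(norm w)\<^sup>2 \<le> (3/2)\<^sup>2\<close> Im_nonneg[OF w(1)] by (intro mult_left_mono) (auto simp: power2_eq_square)
    finally show "M * (Re (cinner (A w) w))\<^sup>2 \<le> Im (cinner (A w) w)"
      by simp
  qed
qed

section \<open>Vanishing of the cross terms\<close>

lemma skew_cross_term_bound:
  fixes D :: "'a::complex_inner set"
  assumes D: "is_subspace D" "linear_on D A"
    and Im_nonneg: "\<And>w. w \<in> D \<Longrightarrow> 0 \<le> Im (cinner (A w) w)"
    and "u \<in> D" and "f \<in> D" and z: "cmod (cinner (A u) u) \<le> e" and "0 < e"
    and Q: "cmod (cinner (A f) f) \<le> C\<^sup>2"
  shows "cmod (cinner (A f) u - cnj (cinner (A u) f)) \<le> sqrt e * (1 + C\<^sup>2)"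
proof -
  have "sqrt e * cmod (cinner (A f) u - cnj (cinner (A u) f))
      \<le> Im (cinner (A u) u) + (sqrt e)\<^sup>2 * cmod (cinner (A f) f)"
  proof (rule skew_part_bound)
    fix s
    show "0 \<le> Im (form_on_line (cinner (A u) u) (cinner (A u) f) (cinner (A f) u) (cinner (A f) f) s)"
      using Im_nonneg[OF subspace_add[OF D(1) \<open>u \<in> D\<close> subspace_scaleC[OF D(1) \<open>f \<in> D\<close>]]]
      by (simp add: cinner_A_add_scaleC[OF D \<open>u \<in> D\<close> \<open>f \<in> D\<close>])
  qed (use \<open>0 < e\<close> in simp)
  also have "\<dots> \<le> e + e * C\<^sup>2"
    unfolding real_sqrt_pow2[OF less_imp_le[OF \<open>0 < e\<close>]]
    using abs_Im_le_cmod[of "cinner (A u) u"] z mult_left_mono[OF Q less_imp_le[OF \<open>0 < e\<close>]]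
    by linarith
  also have "\<dots> = sqrt e * (sqrt e * (1 + C\<^sup>2))"
    using \<open>0 < e\<close> by (simp add: algebra_simps flip: power2_eq_square)
  finally show ?thesis
    using \<open>0 < e\<close> by simp
qed

lemma hermitian_cross_term_small:
  fixes D :: "'a::complex_inner set"
  assumes D: "is_subspace D" "linear_on D A"
    and tangent: "\<And>w. w \<in> D \<Longrightarrow> 1/2 \<le> norm w \<Longrightarrow> norm w \<le> 3/2 \<Longrightarrow>
      0 < Re (cinner (A w) w) \<Longrightarrow> cmod (cinner (A w) w) < a \<Longrightarrow>
      M * (Re (cinner (A w) w))\<^sup>2 \<le> Im (cinner (A w) w)"
    and u: "u \<in> D" "norm u = 1" and f: "f \<in> D" "norm f \<le> C"
    and c: "cmod (cinner (A u) f) \<le> C" and d: "cmod (cinner (A f) u) \<le> C"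
    and Q: "cmod (cinner (A f) f) \<le> C\<^sup>2"
    and z: "0 \<le> Re (cinner (A u) u)" "cmod (cinner (A u) u) \<le> t ^ 4"
    and skew: "cmod (cinner (A f) u - cnj (cinner (A u) f)) \<le> t\<^sup>2 * (1 + C\<^sup>2)"
    and t: "0 < t" "t \<le> 1" "t * C \<le> 1/2" "t * C\<^sup>2 \<le> \<delta> / 2" "t ^ 4 + 2 * t * C + t\<^sup>2 * C\<^sup>2 < a"
    and "0 < \<delta>" and "0 \<le> M" and M_large: "2 + 2 * C\<^sup>2 < M * (\<delta> / 2)\<^sup>2"
  shows "cmod (cnj (cinner (A u) f) + cinner (A f) u) < \<delta>"
proof -
  define q where "q = form_on_line (cinner (A u) u) (cinner (A u) f) (cinner (A f) u) (cinner (A f) f)"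
  have flat_line: "M * (Re (q s))\<^sup>2 \<le> Im (q s)"
    if "cmod s = t" "0 < Re (q s)" "cmod (q s) < a" for s
  proof -
    have "norm (scaleC s f) \<le> 1/2"
      using that(1) t(3) mult_left_mono[OF f(2) less_imp_le[OF t(1)]] by (simp add: norm_scaleC)
    then have "1/2 \<le> norm (u + scaleC s f)" "norm (u + scaleC s f) \<le> 3/2"
      using norm_diff_ineq[of u "scaleC s f"] norm_triangle_ineq[of u "scaleC s f"] u(2) by linarith+
    then show ?thesis
      using tangent[of "u + scaleC s f"] subspace_add[OF D(1) u(1) subspace_scaleC[OF D(1) f(1)]] that
      by (simp add: cinner_A_add_scaleC[OF D u(1) f(1)] q_def)
  qed
  have t_powers: "t ^ 4 \<le> t\<^sup>2" "t * t\<^sup>2 \<le> t\<^sup>2"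
    using t(1,2) by (auto simp: power_decreasing mult_left_le_one_le)
  have Q_small: "t\<^sup>2 * cmod (cinner (A f) f) \<le> t\<^sup>2 * C\<^sup>2"
    using Q by (simp add: mult_left_mono)
  have "Im (cinner (A u) u) \<le> t\<^sup>2"
    using abs_Im_le_cmod[of "cinner (A u) u"] z(2) t_powers(1) by linarith
  moreover have "t * cmod (cinner (A f) u - cnj (cinner (A u) f)) \<le> (t * t\<^sup>2) * (1 + C\<^sup>2)"
    using mult_left_mono[OF skew less_imp_le[OF t(1)]] by (simp add: mult.assoc)
  moreover have "(t * t\<^sup>2) * (1 + C\<^sup>2) \<le> t\<^sup>2 * (1 + C\<^sup>2)"
    using t_powers(2) by (rule mult_right_mono) simp
  ultimately have Im_small: "Im (cinner (A u) u) + t * cmod (cinner (A f) u - cnj (cinner (A u) f))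
      + t\<^sup>2 * cmod (cinner (A f) f) \<le> t\<^sup>2 * (2 + 2 * C\<^sup>2)"
    using Q_small by (simp add: algebra_simps)
  have "t * (cmod (cinner (A u) f) + cmod (cinner (A f) u)) \<le> 2 * t * C"
    using mult_left_mono[OF add_mono[OF c d], of t] t(1) by simp
  then have norm_small: "cmod (cinner (A u) u) + t * (cmod (cinner (A u) f) + cmod (cinner (A f) u))
      + t\<^sup>2 * cmod (cinner (A f) f) < a"
    using Q_small z(2) t(5) by linarith
  have "t * cmod (cinner (A f) f) \<le> \<delta> / 2"
    using mult_left_mono[OF Q less_imp_le[OF t(1)]] t(4) by linarith
  then show ?thesis
    using hermitian_part_bound[OF flat_line[unfolded q_def] t(1) \<open>0 < \<delta>\<close> \<open>0 \<le> M\<close> z(1)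
        Im_small norm_small _ M_large] by blast
qed

lemma hermitian_cross_term_tendsto_zero:
  fixes D :: "'a::complex_inner set" and u f :: "nat \<Rightarrow> 'a" and e :: "nat \<Rightarrow> real"
  assumes D: "is_subspace D" "linear_on D A"
    and Im_nonneg: "\<And>w. w \<in> D \<Longrightarrow> 0 \<le> Im (cinner (A w) w)"
    and tangent: "tangent_to_imaginary_axis D A"
    and u: "\<And>n. u n \<in> D" "\<And>n. norm (u n) = 1" and f: "\<And>n. f n \<in> D" "\<And>n. norm (f n) \<le> C"
    and c: "\<And>n. cmod (cinner (A (u n)) (f n)) \<le> C" and d: "\<And>n. cmod (cinner (A (f n)) (u n)) \<le> C"
    and Q: "\<And>n. cmod (cinner (A (f n)) (f n)) \<le> C\<^sup>2"
    and z: "\<And>n. 0 \<le> Re (cinner (A (u n)) (u n))" "\<And>n. cmod (cinner (A (u n)) (u n)) \<le> e n"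
    and e: "\<And>n. 0 < e n" "e \<longlonglongrightarrow> 0"
    and skew: "\<And>n. cmod (cinner (A (f n)) (u n) - cnj (cinner (A (u n)) (f n))) \<le> sqrt (e n) * (1 + C\<^sup>2)"
  shows "(\<lambda>n. cnj (cinner (A (u n)) (f n)) + cinner (A (f n)) (u n)) \<longlonglongrightarrow> 0"
proof (rule tendstoI)
  fix \<delta> :: real assume "0 < \<delta>"
  define M where "M = (4 * (2 + 2 * C\<^sup>2) + 4) / \<delta>\<^sup>2"
  have "0 \<le> M" and M_large: "2 + 2 * C\<^sup>2 < M * (\<delta> / 2)\<^sup>2"
    using \<open>0 < \<delta>\<close> by (simp_all add: M_def power_divide)
  obtain a where "0 < a" and flat: "\<And>w. w \<in> D \<Longrightarrow> 1/2 \<le> norm w \<Longrightarrow> norm w \<le> 3/2 \<Longrightarrow>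
    0 < Re (cinner (A w) w) \<Longrightarrow> cmod (cinner (A w) w) < a \<Longrightarrow>
    M * (Re (cinner (A w) w))\<^sup>2 \<le> Im (cinner (A w) w)"
    using tangent_to_imaginary_axis_near_sphere[OF tangent Im_nonneg] by metis
  define t where "t n = sqrt (sqrt (e n))" for n
  have t_pos: "0 < t n" and t_power2: "(t n)\<^sup>2 = sqrt (e n)" for n
    using e(1)[of n] by (simp_all add: t_def)
  have t_power4: "t n ^ 4 = e n" for n
    using t_power2[of n] e(1)[of n] power_mult[of "t n" 2 2] by simp
  have t_lim: "t \<longlonglongrightarrow> 0"
    unfolding t_def using tendsto_real_sqrt[OF tendsto_real_sqrt[OF e(2)]] by simp
  have "(\<lambda>n. t n * C) \<longlonglongrightarrow> 0" "(\<lambda>n. t n * C\<^sup>2) \<longlonglongrightarrow> 0"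
    "(\<lambda>n. t n ^ 4 + 2 * t n * C + (t n)\<^sup>2 * C\<^sup>2) \<longlonglongrightarrow> 0"
    using t_lim by (auto intro!: tendsto_eq_intros)
  then have "\<forall>\<^sub>F n in sequentially. t n < 1 \<and> t n * C < 1/2 \<and> t n * C\<^sup>2 < \<delta> / 2
      \<and> t n ^ 4 + 2 * t n * C + (t n)\<^sup>2 * C\<^sup>2 < a"
    using t_lim \<open>0 < \<delta>\<close> \<open>0 < a\<close> by (intro eventually_conj order_tendstoD(2)) auto
  then show "\<forall>\<^sub>F n in sequentially.
      dist (cnj (cinner (A (u n)) (f n)) + cinner (A (f n)) (u n)) 0 < \<delta>"
  proof eventually_elim
    case (elim n)
    then show ?case
      using hermitian_cross_term_small[OF D flat u(1)[of n] u(2)[of n] f(1)[of n] f(2)[of n]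
          c[of n] d[of n] Q[of n] z(1)[of n], where t = "t n"]
        z(2) skew t_pos \<open>0 < \<delta>\<close> \<open>0 \<le> M\<close> M_large
      by (simp add: t_power4 t_power2)
  qed
qed

lemma cross_terms_tendsto_zero:
  fixes D :: "'a::complex_inner set" and u f :: "nat \<Rightarrow> 'a" and e :: "nat \<Rightarrow> real"
  assumes D: "is_subspace D" "linear_on D A"
    and Im_nonneg: "\<And>w. w \<in> D \<Longrightarrow> 0 \<le> Im (cinner (A w) w)"
    and tangent: "tangent_to_imaginary_axis D A"
    and u: "\<And>n. u n \<in> D" "\<And>n. norm (u n) = 1" and f: "\<And>n. f n \<in> D" "\<And>n. norm (f n) \<le> C"
    and c: "\<And>n. cmod (cinner (A (u n)) (f n)) \<le> C" and d: "\<And>n. cmod (cinner (A (f n)) (u n)) \<le> C"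
    and Q: "\<And>n. cmod (cinner (A (f n)) (f n)) \<le> C\<^sup>2"
    and z: "\<And>n. 0 \<le> Re (cinner (A (u n)) (u n))" "\<And>n. cmod (cinner (A (u n)) (u n)) \<le> e n"
    and e: "\<And>n. 0 < e n" "e \<longlonglongrightarrow> 0"
  shows "(\<lambda>n. cinner (A (u n)) (f n)) \<longlonglongrightarrow> 0" and "(\<lambda>n. cinner (A (f n)) (u n)) \<longlonglongrightarrow> 0"
proof -
  define k where "k n = cinner (A (f n)) (u n) - cnj (cinner (A (u n)) (f n))" for n
  define h where "h n = cnj (cinner (A (u n)) (f n)) + cinner (A (f n)) (u n)" for n
  have skew: "cmod (k n) \<le> sqrt (e n) * (1 + C\<^sup>2)" for n
    unfolding k_def using skew_cross_term_bound[OF D Im_nonneg u(1) f(1) z(2) e(1) Q] .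
  have "(\<lambda>n. sqrt (e n) * (1 + C\<^sup>2)) \<longlonglongrightarrow> 0"
    by (rule tendsto_mult_left_zero[OF tendsto_real_sqrt[OF e(2), unfolded real_sqrt_zero]])
  then have "k \<longlonglongrightarrow> 0"
    by (rule Lim_null_comparison[OF always_eventually, rotated]) (simp add: skew)
  moreover have "h \<longlonglongrightarrow> 0"
    unfolding h_def
    using hermitian_cross_term_tendsto_zero[OF D Im_nonneg tangent u f c d Q z e skew[unfolded k_def]] .
  ultimately have "(\<lambda>n. (h n - k n) / 2) \<longlonglongrightarrow> 0" "(\<lambda>n. (h n + k n) / 2) \<longlonglongrightarrow> 0"
    using tendsto_diff[of h 0 sequentially k 0] tendsto_add[of h 0 sequentially k 0]
    by (simp_all add: tendsto_divide_zero)
  then show "(\<lambda>n. cinner (A (u n)) (f n)) \<longlonglongrightarrow> 0" "(\<lambda>n. cinner (A (f n)) (u n)) \<longlonglongrightarrow> 0"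
    using tendsto_cnj[of "\<lambda>n. (h n - k n) / 2" 0 sequentially] by (simp_all add: h_def k_def)
qed
theorem mainTheorem7:
  fixes D :: "'a::chilbert_space set" and A :: "'a \<Rightarrow> 'a"
    and \<alpha> :: complex and \<epsilon> :: "nat \<Rightarrow> real" and u f :: "nat \<Rightarrow> 'a"
  assumes dense: "densely_defined D A"
    and closed: "closed_operator D A"
    and dom_adj: "D \<subseteq> adj_dom D A"
    and num_upper: "Num D A \<subseteq> {z. Im z \<ge> 0}"
    and K_infty: "\<And>a :: nat \<Rightarrow> real. (\<forall>n. a n > 0) \<Longrightarrow> a \<longlonglongrightarrow> 0 \<Longrightarrow>
                    ((\<lambda>n. Kfun D A (a n)) \<longlongrightarrow> \<infinity>) sequentially"
    and alpha_num: "\<alpha> \<in> Num D A"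
    and alpha_re: "0 < Re \<alpha>" "Re \<alpha> < 1"
    and alpha_im: "0 < Im \<alpha>" "Im \<alpha> < 1"
    and alpha_abs: "cmod \<alpha> < 1"
    and segment: "\<forall>t::real. 0 < t \<and> t \<le> 1 \<longrightarrow> complex_of_real t * \<alpha> \<in> Num D A"
    and eps: "\<forall>n. 0 < \<epsilon> n \<and> \<epsilon> n < 1" "\<epsilon> \<longlonglongrightarrow> 0"
    and u: "\<forall>n. u n \<in> D \<and> norm (u n) = 1 \<and> cinner (A (u n)) (u n) = complex_of_real (\<epsilon> n) * \<alpha>"
    and f_dom: "\<forall>n. f n \<in> D"
    and f_bdd: "\<exists>C. \<forall>n. norm (f n) \<le> C \<and> norm (A (f n)) \<le> C \<and> norm (adj D A (f n)) \<le> C"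
  shows "(\<lambda>n. cmod (cinner (f n) (A (u n))) + cmod (cinner (f n) (adj D A (u n)))) \<longlonglongrightarrow> 0"
proof -
  have D: "is_subspace D" "linear_on D A" and "closure D = UNIV"
    using dense unfolding densely_defined_def by auto
  have uD: "\<And>n. u n \<in> D" "\<And>n. norm (u n) = 1" and fD: "\<And>n. f n \<in> D"
    and z: "\<And>n. cinner (A (u n)) (u n) = complex_of_real (\<epsilon> n) * \<alpha>" and e: "\<And>n. 0 < \<epsilon> n"
    using u f_dom eps(1) by auto
  obtain C where C: "\<And>n. norm (f n) \<le> C" "\<And>n. norm (A (f n)) \<le> C" "\<And>n. norm (adj D A (f n)) \<le> C"
    using f_bdd by blast
  have c: "cmod (cinner (A (u n)) (f n)) \<le> C" and d: "cmod (cinner (A (f n)) (u n)) \<le> C"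
    and Q: "cmod (cinner (A (f n)) (f n)) \<le> C\<^sup>2" for n
    using cinner_A_bounds[OF \<open>closure D = UNIV\<close> dom_adj uD(1,2) fD C(1,2,3)] by auto
  have z_bounds: "0 \<le> Re (cinner (A (u n)) (u n))" "cmod (cinner (A (u n)) (u n)) \<le> \<epsilon> n" for n
    using e[of n] alpha_re(1) mult_left_le[OF less_imp_le[OF alpha_abs], of "\<epsilon> n"]
    by (auto simp: z norm_mult)
  have tangent: "tangent_to_imaginary_axis D A"
    using tangent_to_imaginary_axis_if_Kfun_tendsto[OF D] K_infty LIMSEQ_inverse_real_of_nat by simp
  note limits = cross_terms_tendsto_zero[OF D Im_cinner_A_nonneg[OF D num_upper] tangent uD fD C(1)
      c d Q z_bounds e eps(2)]
  have "cmod (cinner (f n) (A (u n))) = cmod (cinner (A (u n)) (f n))"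
    "cinner (f n) (adj D A (u n)) = cinner (A (f n)) (u n)" for n
    using cinner_commute[of "f n" "A (u n)"] cinner_adj[OF \<open>closure D = UNIV\<close> subsetD[OF dom_adj uD(1)] fD]
    by simp_all
  then show ?thesis
    using tendsto_add_zero[OF tendsto_norm_zero[OF limits(1)] tendsto_norm_zero[OF limits(2)]] by simp
qed

end
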